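(* Let $\mathcal{S}\subset\mathbb{R}^d$ be a smooth, closed one-dimensional manifold of arclength $L>0$, parameterized by arclength $s$, so that functions on $\mathcal{S}$ are identified with $L$-periodic functions on $\mathbb{R}$. Let $c>0$ and let $f$ be a continuous $L$-periodic function, and let $u$ be the unique $L$-periodic solution of $(c-\frac{\mathrm{d}^2}{\mathrm{d}s^2})u=f$ on $\mathbb{R}$. Let $\mathcal{S}_1=[a_1,b_1]$ and $\mathcal{S}_2=[a_2,b_2]$ be overlapping subdomains with $a_1<0$ and $b_2>L$. Set $\ell_1=b_1-a_1$, $\ell_2=b_2-a_2$, and define the overlaps $\delta_1=b_1-a_2>0$ and $\delta_2=b_2-(a_1+L)>0$. Assume $0<\delta_1+\delta_2<\min\{\ell_1,\ell_2\}$. Starting from arbitrary continuous initial functions $u_1^0$ on $\mathcal{S}_1$ and $u_2^0$ on $\mathcal{S}_2$, define for $n=0,1,2,\dots$ the parallel Schwarz iterates $u_1^{n+1}$ on $\mathcal{S}_1$ and $u_2^{n+1}$ on $\mathcal{S}_2$ as the solutions of $$\begin{cases}(c-\frac{\mathrm{d}^2}{\mathrm{d}s^2})u_1^{n+1}=f &\text{in } (a_1,b_1),\\ u_1^{n+1}(a_1)=u_2^n(a_1+L),\\ u_1^{n+1}(b_1)=u_2^n(b_1),\end{cases}\qquad \begin{cases}(c-\frac{\mathrm{d}^2}{\mathrm{d}s^2})u_2^{n+1}=f &\text{in } (a_2,b_2),\\ u_2^{n+1}(a_2)=u_1^n(a_2),\\ u_2^{n+1}(b_2)=u_1^n(b_2-L).\end{cases}$$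 Then the iteration converges globally: for every choice of initial functions, $\max_{s\in\mathcal{S}_j}|u_j^n(s)-u(s)|\to 0$ as $n\to\infty$ for $j=1,2$.
   Context: This iteration is the continuous (mesh size $h\to 0$) limit of the parallel Schwarz / restricted additive Schwarz solver applied to the closest point method discretization of the surface intrinsic positive Helmholtz equation $(c-\Delta_{\mathcal{S}})u=f$ on the curve $\mathcal{S}$; on a one-dimensional manifold parameterized by arclength, $\Delta_{\mathcal{S}}=\mathrm{d}^2/\mathrm{d}s^2$. Since $a_1<0$ and $b_2>L$, the subdomain intervals extend beyond $[0,L]$ and $f$ is evaluated through its $L$-periodic extension. The boundary points used in the transmission conditions satisfy $a_1+L,\,b_1\in\mathcal{S}_2$ and $a_2,\,b_2-L\in\mathcal{S}_1$ under the stated assumptions. *)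

theory Defs
  imports Complex_Main
begin

definition helmholtz_sol_on :: "real \<Rightarrow> (real \<Rightarrow> real) \<Rightarrow> real set \<Rightarrow> (real \<Rightarrow> real) \<Rightarrow> bool" where
  "helmholtz_sol_on c f I v \<longleftrightarrow>
     (\<exists>v' v''. \<forall>x\<in>I. (v has_real_derivative v' x) (at x) \<and>
                      (v' has_real_derivative v'' x) (at x) \<and>
                      c * v x - v'' x = f x)"

end

theory Submission
  imports Defs "HOL-Analysis.Analysis"
begin

text \<open>The error of each subdomain iterate solves the homogeneous equation \<open>e'' = c e\<close>, so it is
  the combination \<open>e(a) sinh (k (b - x)) + e(b) sinh (k (x - a))\<close> divided by \<open>sinh (k (b - a))\<close>,
  \<open>k = sqrt c\<close>. Hence \<open>|e x|\<close> is at most the largest boundary error times a weight which is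
  strictly below \<open>1\<close> inside the subdomain. Every transmission point lies inside the other
  subdomain, so one sweep multiplies the largest error at the four transmission points by a fixed
  factor \<open>\<rho> < 1\<close>; the errors decay geometrically, uniformly on both subdomains.\<close>

lemma helmholtz_sol_on_continuous_on:
  assumes "helmholtz_sol_on c f I v"
  shows "continuous_on I v"
  using assms unfolding helmholtz_sol_on_def
  by (meson DERIV_continuous continuous_at_imp_continuous_on)

lemma helmholtz_sol_on_diff:
  assumes "helmholtz_sol_on c f I v" and "helmholtz_sol_on c f I w"
  shows "helmholtz_sol_on c (\<lambda>_. 0) I (\<lambda>x. v x - w x)"
proof -
  obtain v' v'' where v: "\<forall>x\<in>I. (v has_real_derivative v' x) (at x) \<and>
      (v' has_real_derivative v'' x) (at x) \<and> c * v x - v'' x = f x"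
    using assms(1) unfolding helmholtz_sol_on_def by blast
  obtain w' w'' where w: "\<forall>x\<in>I. (w has_real_derivative w' x) (at x) \<and>
      (w' has_real_derivative w'' x) (at x) \<and> c * w x - w'' x = f x"
    using assms(2) unfolding helmholtz_sol_on_def by blast
  show ?thesis
    unfolding helmholtz_sol_on_def
    by (rule exI[of _ "\<lambda>x. v' x - w' x"], rule exI[of _ "\<lambda>x. v'' x - w'' x"])
       (use v w in \<open>auto intro!: DERIV_diff simp: algebra_simps\<close>)
qed

lemma helmholtz_homogeneous_first_integral:
  fixes \<kappa> x :: real
  assumes "\<kappa> * \<kappa> = c"
    and "(e has_real_derivative e' x) (at x)" and "(e' has_real_derivative e'' x) (at x)"
    and "c * e x - e'' x = 0"
  shows "((\<lambda>t. (e' t - \<kappa> * e t) * exp (\<kappa> * t)) has_real_derivative 0) (at x)"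
proof -
  have "((\<lambda>t. (e' t - \<kappa> * e t) * exp (\<kappa> * t)) has_real_derivative
      (e'' x - \<kappa> * e' x) * exp (\<kappa> * x) + (e' x - \<kappa> * e x) * (exp (\<kappa> * x) * \<kappa>)) (at x)"
    by (rule derivative_eq_intros assms(2,3) refl | simp)+
  moreover have "e'' x = \<kappa> * \<kappa> * e x"
    using assms(1,4) by simp
  then have "(e'' x - \<kappa> * e' x) * exp (\<kappa> * x) + (e' x - \<kappa> * e x) * (exp (\<kappa> * x) * \<kappa>) = 0"
    by (simp add: algebra_simps)
  ultimately show ?thesis by simp
qed

lemma helmholtz_homogeneous_exp_form:
  fixes a b c :: real and e :: "real \<Rightarrow> real"
  assumes ab: "a < b" and c: "c > 0" and cont: "continuous_on {a..b} e"
    and sol: "helmholtz_sol_on c (\<lambda>_. 0) {a<..<b} e"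
  obtains \<alpha> \<beta> where "\<And>x. x \<in> {a..b} \<Longrightarrow> e x = \<alpha> * exp (sqrt c * x) + \<beta> * exp (- (sqrt c * x))"
proof -
  define k where "k = sqrt c"
  have k: "k > 0" "k * k = c" "(- k) * (- k) = c" using c by (auto simp: k_def)
  obtain e' e'' where d: "\<forall>x\<in>{a<..<b}. (e has_real_derivative e' x) (at x) \<and>
      (e' has_real_derivative e'' x) (at x) \<and> c * e x - e'' x = 0"
    using sol unfolding helmholtz_sol_on_def by blast
  define m where "m = (a + b) / 2"
  have m: "m \<in> {a<..<b}" using ab by (auto simp: m_def)
  have const: "(e' x - \<kappa> * e x) * exp (\<kappa> * x) = (e' m - \<kappa> * e m) * exp (\<kappa> * m)"
    if "x \<in> {a<..<b}" "\<kappa> * \<kappa> = c" for x \<kappa>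
    using DERIV_isconst3[OF ab that(1) m, of "\<lambda>t. (e' t - \<kappa> * e t) * exp (\<kappa> * t)"]
      helmholtz_homogeneous_first_integral[OF that(2)] d by blast
  define P where "P = (e' m - k * e m) * exp (k * m)"
  define Q where "Q = (e' m + k * e m) * exp (- (k * m))"
  \<comment> \<open>solve \<open>e' - k e = P exp (- k x)\<close>, \<open>e' + k e = Q exp (k x)\<close> for \<open>e\<close>\<close>
  define g where "g x = Q / (2 * k) * exp (k * x) - P / (2 * k) * exp (- (k * x))" for x
  have "e x = g x" if x: "x \<in> {a<..<b}" for x
  proof -
    have "P * exp (- (k * x)) = e' x - k * e x"
      using const[OF x k(2)] by (simp add: P_def exp_minus field_simps)
    moreover have "Q * exp (k * x) = e' x + k * e x"
      using const[OF x k(3)] by (simp add: Q_def exp_minus field_simps)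
    moreover have "g x = (Q * exp (k * x) - P * exp (- (k * x))) / (2 * k)"
      by (simp add: g_def diff_divide_distrib)
    ultimately show ?thesis
      using k(1) by simp
  qed
  moreover have "continuous_on {a..b} (\<lambda>x. e x - g x)"
    unfolding g_def by (intro continuous_intros cont)
  ultimately have "e x - g x = 0" if "x \<in> {a..b}" for x
    using continuous_constant_on_closure[of "{a<..<b}" "\<lambda>x. e x - g x" 0 x] ab that by auto
  then show ?thesis
    using that[of "Q / (2 * k)" "- P / (2 * k)"] by (simp add: g_def k_def)
qed

lemma exp_combination_sinh_interpolation:
  fixes \<alpha> \<beta> k a b x :: real
  defines "g \<equiv> \<lambda>t. \<alpha> * exp (k * t) + \<beta> * exp (- (k * t))"
  shows "g x * sinh (k * (b - a)) = g a * sinh (k * (b - x)) + g b * sinh (k * (x - a))"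
  unfolding g_def sinh_def by (simp add: right_diff_distrib exp_diff exp_minus field_simps)

lemma sinh_add_ge:
  fixes x y :: real
  assumes "x \<ge> 0" "y \<ge> 0"
  shows "sinh x + sinh y \<le> sinh (x + y)"
proof -
  have "sinh x * 1 \<le> sinh x * cosh y" "1 * sinh y \<le> cosh x * sinh y"
    using assms cosh_real_ge_1 by (intro mult_left_mono mult_right_mono; simp)+
  then show ?thesis by (simp add: sinh_add)
qed

lemma sinh_add_gt:
  fixes x y :: real
  assumes "x > 0" "y > 0"
  shows "sinh x + sinh y < sinh (x + y)"
proof -
  have "cosh y > 1" using cosh_real_ge_1[of y] cosh_real_one_iff[of y] assms by linarith
  then have "sinh x * 1 < sinh x * cosh y" using assms by (intro mult_strict_left_mono) auto
  moreover have "1 * sinh y \<le> cosh x * sinh y"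
    using assms cosh_real_ge_1 by (intro mult_right_mono) auto
  ultimately show ?thesis by (simp add: sinh_add)
qed

text \<open>The value at \<open>x\<close> of the solution of \<open>e'' = k\<^sup>2 e\<close> on \<open>[a, b]\<close> with \<open>e(a) = e(b) = 1\<close>.\<close>

definition helmholtz_decay :: "real \<Rightarrow> real \<Rightarrow> real \<Rightarrow> real \<Rightarrow> real" where
  "helmholtz_decay k a b x = (sinh (k * (b - x)) + sinh (k * (x - a))) / sinh (k * (b - a))"

lemma helmholtz_decay_bounds:
  fixes k a b x :: real
  assumes "k > 0" "a < b" "x \<in> {a..b}"
  shows "0 \<le> helmholtz_decay k a b x \<and> helmholtz_decay k a b x \<le> 1"
  using sinh_add_ge[of "k * (b - x)" "k * (x - a)"] assms
  by (simp add: helmholtz_decay_def algebra_simps)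

lemma helmholtz_decay_less_1:
  fixes k a b x :: real
  assumes "k > 0" "x \<in> {a<..<b}"
  shows "helmholtz_decay k a b x < 1"
  using sinh_add_gt[of "k * (b - x)" "k * (x - a)"] assms
  by (simp add: helmholtz_decay_def algebra_simps)

lemma helmholtz_homogeneous_bound:
  fixes a b c x :: real and e :: "real \<Rightarrow> real"
  assumes ab: "a < b" and c: "c > 0" and cont: "continuous_on {a..b} e"
    and sol: "helmholtz_sol_on c (\<lambda>_. 0) {a<..<b} e" and x: "x \<in> {a..b}"
  shows "\<bar>e x\<bar> \<le> helmholtz_decay (sqrt c) a b x * max \<bar>e a\<bar> \<bar>e b\<bar>"
proof -
  define k where "k = sqrt c"
  have k: "k > 0" using c by (simp add: k_def)
  have interp: "e x * sinh (k * (b - a)) = e a * sinh (k * (b - x)) + e b * sinh (k * (x - a))"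
  proof -
    obtain \<alpha> \<beta> where "\<And>t. t \<in> {a..b} \<Longrightarrow> e t = \<alpha> * exp (k * t) + \<beta> * exp (- (k * t))"
      using helmholtz_homogeneous_exp_form[OF ab c cont sol] unfolding k_def by blast
    then show ?thesis
      using exp_combination_sinh_interpolation[where \<alpha> = \<alpha> and \<beta> = \<beta> and k = k and x = x] x ab by simp
  qed
  have s: "sinh (k * (b - x)) \<ge> 0" "sinh (k * (x - a)) \<ge> 0" "sinh (k * (b - a)) > 0"
    using x ab k by auto
  define M where "M = max \<bar>e a\<bar> \<bar>e b\<bar>"
  have "\<bar>e x\<bar> * sinh (k * (b - a)) = \<bar>e a * sinh (k * (b - x)) + e b * sinh (k * (x - a))\<bar>"
    using s(3) by (simp flip: interp add: abs_mult)
  also have "\<dots> \<le> \<bar>e a\<bar> * sinh (k * (b - x)) + \<bar>e b\<bar> * sinh (k * (x - a))"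
    using s(1,2) abs_triangle_ineq[of "e a * sinh (k * (b - x))" "e b * sinh (k * (x - a))"]
    by (simp add: abs_mult)
  also have "\<dots> \<le> M * sinh (k * (b - x)) + M * sinh (k * (x - a))"
    using s(1,2) unfolding M_def by (intro add_mono mult_right_mono) auto
  finally show ?thesis
    using s(3) by (simp add: helmholtz_decay_def M_def k_def field_simps)
qed

lemma helmholtz_error_bound:
  fixes a b c x :: real and V u f :: "real \<Rightarrow> real"
  assumes "a < b" and "c > 0"
    and "continuous_on {a..b} V" and "helmholtz_sol_on c f {a<..<b} V"
    and "continuous_on {a..b} u" and "helmholtz_sol_on c f {a<..<b} u"
    and "x \<in> {a..b}"
  shows "\<bar>V x - u x\<bar> \<le> helmholtz_decay (sqrt c) a b x * max \<bar>V a - u a\<bar> \<bar>V b - u b\<bar>"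
  using helmholtz_homogeneous_bound[of a b c "\<lambda>x. V x - u x"] helmholtz_sol_on_diff assms
  by (simp add: continuous_on_diff)

lemma geometric_decay_bound:
  fixes M :: "nat \<Rightarrow> real"
  assumes "0 \<le> \<rho>" and "\<And>n. M (Suc n) \<le> \<rho> * M n"
  shows "M n \<le> \<rho> ^ n * M 0"
proof (induction n)
  case (Suc n)
  have "M (Suc n) \<le> \<rho> * M n" by (rule assms(2))
  also have "\<dots> \<le> \<rho> * (\<rho> ^ n * M 0)" using Suc assms(1) by (intro mult_left_mono)
  finally show ?case by simp
qed simp

text \<open>The parallel Schwarz sweep with the differential equation abstracted away.\<close>

lemma coupled_contraction_decay:
  fixes E1 E2 :: "nat \<Rightarrow> 'a \<Rightarrow> real" and r1 r2 :: "'a \<Rightarrow> real"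
  assumes E1: "\<And>n x. x \<in> S1 \<Longrightarrow> \<bar>E1 (Suc n) x\<bar> \<le> r1 x * max \<bar>E2 n p2\<bar> \<bar>E2 n q2\<bar>"
    and E2: "\<And>n x. x \<in> S2 \<Longrightarrow> \<bar>E2 (Suc n) x\<bar> \<le> r2 x * max \<bar>E1 n p1\<bar> \<bar>E1 n q1\<bar>"
    and r1: "\<And>x. x \<in> S1 \<Longrightarrow> 0 \<le> r1 x \<and> r1 x \<le> 1"
    and r2: "\<And>x. x \<in> S2 \<Longrightarrow> 0 \<le> r2 x \<and> r2 x \<le> 1"
    and pts: "p1 \<in> S1" "q1 \<in> S1" "p2 \<in> S2" "q2 \<in> S2"
    and less: "r1 p1 < 1" "r1 q1 < 1" "r2 p2 < 1" "r2 q2 < 1"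
  obtains B where "B \<longlonglongrightarrow> 0"
    and "\<And>n x. x \<in> S1 \<Longrightarrow> \<bar>E1 (Suc n) x\<bar> \<le> B n"
    and "\<And>n x. x \<in> S2 \<Longrightarrow> \<bar>E2 (Suc n) x\<bar> \<le> B n"
proof -
  define \<rho> where "\<rho> = max (max (r1 p1) (r1 q1)) (max (r2 p2) (r2 q2))"
  define m1 where "m1 n = max \<bar>E1 n p1\<bar> \<bar>E1 n q1\<bar>" for n
  define m2 where "m2 n = max \<bar>E2 n p2\<bar> \<bar>E2 n q2\<bar>" for n
  define M where "M n = max (m1 n) (m2 n)" for n
  have \<rho>: "0 \<le> \<rho>" "\<rho> < 1"
    using r1[OF pts(1)] less unfolding \<rho>_def by (simp_all add: le_max_iff_disj)
  have scale: "\<bar>E\<bar> \<le> t * M n" if "\<bar>E\<bar> \<le> r * m" "0 \<le> r" "r \<le> t" "m \<le> M n" "0 \<le> m"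
    for E r m t n
    using that by (meson mult_mono order_trans)
  have "\<bar>E1 (Suc n) x\<bar> \<le> \<rho> * M n" if "x \<in> {p1, q1}" for n x
    using that pts r1 by (intro scale[OF E1]) (auto simp: \<rho>_def M_def m2_def)
  moreover have "\<bar>E2 (Suc n) x\<bar> \<le> \<rho> * M n" if "x \<in> {p2, q2}" for n x
    using that pts r2 by (intro scale[OF E2]) (auto simp: \<rho>_def M_def m1_def)
  ultimately have "M (Suc n) \<le> \<rho> * M n" for n
    unfolding M_def m1_def m2_def by simp
  then have "M n \<le> \<rho> ^ n * M 0" for n
    using geometric_decay_bound \<rho>(1) by blast
  moreover have "\<bar>E1 (Suc n) x\<bar> \<le> M n" if "x \<in> S1" for n x
    using scale[OF E1[OF that, of n], of 1 n] r1[OF that] by (simp add: M_def m2_def)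
  moreover have "\<bar>E2 (Suc n) x\<bar> \<le> M n" if "x \<in> S2" for n x
    using scale[OF E2[OF that, of n], of 1 n] r2[OF that] by (simp add: M_def m1_def)
  moreover have "(\<lambda>n. \<rho> ^ n * M 0) \<longlonglongrightarrow> 0"
    using \<rho> by (intro tendsto_mult_left_zero LIMSEQ_power_zero) auto
  ultimately show ?thesis
    using that[of "\<lambda>n. \<rho> ^ n * M 0"] by (meson order_trans)
qed

lemma SUP_abs_tendsto_zero:
  fixes g :: "nat \<Rightarrow> 'a \<Rightarrow> real"
  assumes "S \<noteq> {}" and "B \<longlonglongrightarrow> 0" and "\<And>n x. x \<in> S \<Longrightarrow> \<bar>g (Suc n) x\<bar> \<le> B n"
  shows "(\<lambda>n. SUP x\<in>S. \<bar>g n x\<bar>) \<longlonglongrightarrow> 0"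
proof -
  obtain x0 where x0: "x0 \<in> S" using assms(1) by blast
  have "0 \<le> (SUP x\<in>S. \<bar>g (Suc n) x\<bar>) \<and> (SUP x\<in>S. \<bar>g (Suc n) x\<bar>) \<le> B n" for n
  proof
    have "bdd_above ((\<lambda>x. \<bar>g (Suc n) x\<bar>) ` S)"
      using assms(3) by (intro bdd_aboveI2)
    then show "0 \<le> (SUP x\<in>S. \<bar>g (Suc n) x\<bar>)"
      using x0 by (meson abs_ge_zero cSUP_upper order_trans)
    show "(SUP x\<in>S. \<bar>g (Suc n) x\<bar>) \<le> B n"
      using assms(1,3) by (intro cSUP_least)
  qed
  then have "(\<lambda>n. SUP x\<in>S. \<bar>g (Suc n) x\<bar>) \<longlonglongrightarrow> 0"
    by (intro tendsto_sandwich[OF _ _ tendsto_const assms(2)]) auto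
  then show ?thesis by (rule LIMSEQ_imp_Suc)
qed

theorem theorem2:
  fixes c L a1 b1 a2 b2 :: real
    and f u :: "real \<Rightarrow> real"
    and U1 U2 :: "nat \<Rightarrow> real \<Rightarrow> real"
  assumes L_pos: "L > 0" and c_pos: "c > 0"
    and f_cont: "continuous_on UNIV f" and f_per: "\<forall>x. f (x + L) = f x"
    and u_per: "\<forall>x. u (x + L) = u x"
    and u_sol: "helmholtz_sol_on c f UNIV u"
    and a1_neg: "a1 < 0" and b2_gt: "b2 > L"
    and delta1: "b1 - a2 > 0" and delta2: "b2 - (a1 + L) > 0"
    and overlap: "(b1 - a2) + (b2 - (a1 + L)) < min (b1 - a1) (b2 - a2)"
    and init1: "continuous_on {a1..b1} (U1 0)"
    and init2: "continuous_on {a2..b2} (U2 0)"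
    and iter1: "\<forall>n. continuous_on {a1..b1} (U1 (Suc n)) \<and>
                    helmholtz_sol_on c f {a1<..<b1} (U1 (Suc n)) \<and>
                    U1 (Suc n) a1 = U2 n (a1 + L) \<and> U1 (Suc n) b1 = U2 n b1"
    and iter2: "\<forall>n. continuous_on {a2..b2} (U2 (Suc n)) \<and>
                    helmholtz_sol_on c f {a2<..<b2} (U2 (Suc n)) \<and>
                    U2 (Suc n) a2 = U1 n a2 \<and> U2 (Suc n) b2 = U1 n (b2 - L)"
  shows "(\<lambda>n. SUP s\<in>{a1..b1}. \<bar>U1 n s - u s\<bar>) \<longlonglongrightarrow> 0 \<and>
         (\<lambda>n. SUP s\<in>{a2..b2}. \<bar>U2 n s - u s\<bar>) \<longlonglongrightarrow> 0"
proof -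
  \<comment> \<open>Only the values of \<open>U1 0\<close>, \<open>U2 0\<close> at the transmission points matter, and \<open>f\<close> enters
    only through \<open>u\<close>.\<close>
  have ab: "a1 < b1" "a2 < b2" and k: "sqrt c > 0" using overlap delta1 delta2 c_pos by auto
  have inner: "a2 \<in> {a1<..<b1}" "b2 - L \<in> {a1<..<b1}" "a1 + L \<in> {a2<..<b2}" "b1 \<in> {a2<..<b2}"
    using overlap delta1 delta2 by auto
  have u: "continuous_on {a..b} u" "helmholtz_sol_on c f {a<..<b} u" for a b
    using u_sol helmholtz_sol_on_continuous_on continuous_on_subset
    unfolding helmholtz_sol_on_def by blast+
  have per: "u (a1 + L) = u a1" "u b2 = u (b2 - L)"
    using u_per[rule_format, of a1] u_per[rule_format, of "b2 - L"] by simp_all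
  have err1: "\<bar>U1 (Suc n) x - u x\<bar> \<le> helmholtz_decay (sqrt c) a1 b1 x *
      max \<bar>U2 n (a1 + L) - u (a1 + L)\<bar> \<bar>U2 n b1 - u b1\<bar>" if "x \<in> {a1..b1}" for n x
    using helmholtz_error_bound[OF ab(1) c_pos _ _ u that, of "U1 (Suc n)"] iter1 per by simp
  have err2: "\<bar>U2 (Suc n) x - u x\<bar> \<le> helmholtz_decay (sqrt c) a2 b2 x *
      max \<bar>U1 n a2 - u a2\<bar> \<bar>U1 n (b2 - L) - u (b2 - L)\<bar>" if "x \<in> {a2..b2}" for n x
    using helmholtz_error_bound[OF ab(2) c_pos _ _ u that, of "U2 (Suc n)"] iter2 per by simp
  obtain B where "B \<longlonglongrightarrow> 0"
    and "\<And>n x. x \<in> {a1..b1} \<Longrightarrow> \<bar>U1 (Suc n) x - u x\<bar> \<le> B n"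
    and "\<And>n x. x \<in> {a2..b2} \<Longrightarrow> \<bar>U2 (Suc n) x - u x\<bar> \<le> B n"
    using coupled_contraction_decay[where ?S1.0 = "{a1..b1}" and ?S2.0 = "{a2..b2}"
        and ?E1.0 = "\<lambda>n x. U1 n x - u x" and ?E2.0 = "\<lambda>n x. U2 n x - u x", OF err1 err2 helmholtz_decay_bounds[OF k ab(1)] helmholtz_decay_bounds[OF k ab(2)] _ _ _ _
        helmholtz_decay_less_1[OF k inner(1)] helmholtz_decay_less_1[OF k inner(2)]
        helmholtz_decay_less_1[OF k inner(3)] helmholtz_decay_less_1[OF k inner(4)]] inner
    by auto
  then show ?thesis
    using SUP_abs_tendsto_zero[of "{a1..b1}" B] SUP_abs_tendsto_zero[of "{a2..b2}" B] ab by auto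
qed

end
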